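(* Let $d\ge2$, $n\ge1$, $H_i(X)=\sum_{|\alpha|=d}\frac{H_{i,\alpha}}{\alpha!}X^\alpha$ ($i\in[n]$) with complex coefficients, and suppose $(JH)^p=0$ for some integer $1\le p\le n$. Then for every $n$-type tree $\mathcal{T}=(T,\tau)$ with $T\in\mathcal{C}_k^{(d)}$ and every path $(v_0,\dots,v_p)$ in $T$, $$\sum_{\mathcal{T}'\in\mathrm{Sh}(\mathcal{T};v_0,\dots,v_p)}\mathcal{E}_H(\mathcal{T}')=0.$$
   Context: A $d$-Catalan tree is a rooted planar tree in which each vertex has $0$ or $d$ children; $\mathcal{C}_k^{(d)}$ is the set of those with $k$ internal vertices. An $n$-type tree $(T,\tau)$ is such a tree with a type function $\tau$ from its vertices to $[n]$. A path $(v_0,\dots,v_p)$ satisfies: $v_i$ is a child of $v_{i-1}$. The labelled shuffle class $\mathrm{Sh}(\mathcal{T};v_0,\dots,v_p)$ is the set of (distinct) $n$-type trees obtained from $\mathcal{T}$ by (i) rearranging the labelled subtrees subtended by the $(d-1)p$ siblings of $v_1,\dots,v_p$ among those sibling positions, and (ii) giving arbitrary new types in $[n]$ to $v_1,\dots,v_{p-1}$. For an internal vertex $v$, $\mu(v)\in\mathbb{Z}^n_{\ge0}$ counts its children of each type, and $\mathcal{E}_H(\mathcal{T})=\prod_{v\text{ internal}}H_{\tau(v),\mu(v)}$. $JH$ is the Jacobian matrix of $H=(H_1,\dots,H_n)$. *)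

theory Defs
  imports Complex_Main "HOL-Library.Poly_Mapping" "HOL-Library.Multiset"
begin

text \<open>A polynomial is a finitely supported map from monomials (exponent vectors
  finitely supported exponent vectors, exponent of X_j at position j) to coefficients.
  The types/indices in [n] are represented by 0,...,n-1.\<close>

type_synonym cpoly = "(nat \<Rightarrow>\<^sub>0 nat) \<Rightarrow>\<^sub>0 complex"

definition multi_idx :: "nat \<Rightarrow> nat \<Rightarrow> (nat \<Rightarrow>\<^sub>0 nat) set" where
  "multi_idx n d = {\<alpha>. Poly_Mapping.keys \<alpha> \<subseteq> {..<n} \<and> (\<Sum>j<n. Poly_Mapping.lookup \<alpha> j) = d}"

definition mfact :: "nat \<Rightarrow> (nat \<Rightarrow>\<^sub>0 nat) \<Rightarrow> nat" where
  "mfact n \<alpha> = (\<Prod>j<n. fact (Poly_Mapping.lookup \<alpha> j))"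

definition Hpoly :: "nat \<Rightarrow> nat \<Rightarrow> (nat \<Rightarrow> (nat \<Rightarrow>\<^sub>0 nat) \<Rightarrow> complex) \<Rightarrow> nat \<Rightarrow> cpoly" where
  "Hpoly n d Hc i = (\<Sum>\<alpha>\<in>multi_idx n d. Poly_Mapping.single \<alpha> (Hc i \<alpha> / of_nat (mfact n \<alpha>)))"

definition pdiff :: "nat \<Rightarrow> cpoly \<Rightarrow> cpoly" where
  "pdiff j f = (\<Sum>\<alpha>\<in>Poly_Mapping.keys f.
      Poly_Mapping.single (\<alpha> - Poly_Mapping.single j 1) (Poly_Mapping.lookup f \<alpha> * of_nat (Poly_Mapping.lookup \<alpha> j)))"

definition jac :: "nat \<Rightarrow> nat \<Rightarrow> (nat \<Rightarrow> (nat \<Rightarrow>\<^sub>0 nat) \<Rightarrow> complex) \<Rightarrow> nat \<Rightarrow> nat \<Rightarrow> cpoly" where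
  "jac n d Hc i j = pdiff j (Hpoly n d Hc i)"

fun jac_pow :: "nat \<Rightarrow> nat \<Rightarrow> (nat \<Rightarrow> (nat \<Rightarrow>\<^sub>0 nat) \<Rightarrow> complex) \<Rightarrow> nat \<Rightarrow> nat \<Rightarrow> nat \<Rightarrow> cpoly" where
  "jac_pow n d Hc 0 i j = (if i = j then 1 else 0)"
| "jac_pow n d Hc (Suc m) i j = (\<Sum>l<n. jac_pow n d Hc m i l * jac n d Hc l j)"

definition jac_nilpotent_pow :: "nat \<Rightarrow> nat \<Rightarrow> (nat \<Rightarrow> (nat \<Rightarrow>\<^sub>0 nat) \<Rightarrow> complex) \<Rightarrow> nat \<Rightarrow> bool" where
  "jac_nilpotent_pow n d Hc p \<longleftrightarrow> (\<forall>i<n. \<forall>j<n. jac_pow n d Hc p i j = 0)"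

text \<open>A rooted planar tree whose vertices carry a type: Nd i ts is a vertex of
  type i with ordered list of children ts (leaf iff ts = []).\<close>
datatype ttree = Nd nat "ttree list"

fun root_type :: "ttree \<Rightarrow> nat" where
  "root_type (Nd i ts) = i"

fun d_catalan :: "nat \<Rightarrow> ttree \<Rightarrow> bool" where
  "d_catalan d (Nd i ts) \<longleftrightarrow> (ts = [] \<or> length ts = d) \<and> (\<forall>t\<in>set ts. d_catalan d t)"

fun n_type :: "nat \<Rightarrow> ttree \<Rightarrow> bool" where
  "n_type n (Nd i ts) \<longleftrightarrow> i < n \<and> (\<forall>t\<in>set ts. n_type n t)"

fun internal_count :: "ttree \<Rightarrow> nat" where
  "internal_count (Nd i ts) = (if ts = [] then 0 else 1 + sum_list (map internal_count ts))"

definition mu :: "ttree list \<Rightarrow> (nat \<Rightarrow>\<^sub>0 nat)" where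
  "mu ts = sum_list (map (\<lambda>t. Poly_Mapping.single (root_type t) (1::nat)) ts)"

fun EH :: "(nat \<Rightarrow> (nat \<Rightarrow>\<^sub>0 nat) \<Rightarrow> complex) \<Rightarrow> ttree \<Rightarrow> complex" where
  "EH Hc (Nd i ts) = (if ts = [] then 1 else Hc i (mu ts) * prod_list (map (EH Hc) ts))"

text \<open>A vertex is addressed by the list of child positions from the root.\<close>
fun valid_addr :: "ttree \<Rightarrow> nat list \<Rightarrow> bool" where
  "valid_addr t [] = True"
| "valid_addr (Nd i ts) (c # cs) \<longleftrightarrow> c < length ts \<and> valid_addr (ts ! c) cs"

fun subtree_at :: "ttree \<Rightarrow> nat list \<Rightarrow> ttree" where
  "subtree_at t [] = t"
| "subtree_at (Nd i ts) (c # cs) = subtree_at (ts ! c) cs"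

fun replace_at :: "ttree \<Rightarrow> nat list \<Rightarrow> ttree \<Rightarrow> ttree" where
  "replace_at t [] s = s"
| "replace_at (Nd i ts) (c # cs) s = Nd i (ts[c := replace_at (ts ! c) cs s])"

text \<open>For the path starting at (the root of) u and following child positions cs:
  the list of the subtrees subtended by the siblings of v_1,...,v_p, level by level,
  left to right.\<close>
fun path_sibs :: "ttree \<Rightarrow> nat list \<Rightarrow> ttree list" where
  "path_sibs t [] = []"
| "path_sibs (Nd i ts) (c # cs) = (take c ts @ drop (Suc c) ts) @ path_sibs (ts ! c) cs"

fun path_types :: "ttree \<Rightarrow> nat list \<Rightarrow> nat list" where
  "path_types t [] = []"
| "path_types (Nd i ts) (c # cs) = i # path_types (ts ! c) cs"

text \<open>Rebuild a path of d-ary vertices: vertex types tys (for v_0,...,v_{p-1}),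
  child positions cs, sibling subtrees ss (d-1 per level, in order), bottom subtree b
  (the subtree of v_p).\<close>
fun rebuild :: "nat \<Rightarrow> nat list \<Rightarrow> nat list \<Rightarrow> ttree list \<Rightarrow> ttree \<Rightarrow> ttree" where
  "rebuild d (i # tys) (c # cs) ss b =
     Nd i (take c ss @ [rebuild d tys cs (drop (d - 1) ss) b] @ take (d - 1 - c) (drop c ss))"
| "rebuild d _ _ ss b = b"

text \<open>The labelled shuffle class Sh(T; v_0,...,v_p), where v_0 has address a and
  v_i = v_{i-1} extended by the child position cs ! (i-1).  Its members: the
  sibling subtrees are permuted arbitrarily among the sibling positions, the types
  of v_1,...,v_{p-1} are replaced by arbitrary types in [n]; everything else
  (including the types of v_0 and v_p and the subtree of v_p) is kept.\<close>
definition shuffle_class :: "nat \<Rightarrow> nat \<Rightarrow> ttree \<Rightarrow> nat list \<Rightarrow> nat list \<Rightarrow> ttree set" where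
  "shuffle_class n d T a cs =
     {replace_at T a
        (rebuild d (hd (path_types (subtree_at T a) cs) # tys) cs ss (subtree_at T (a @ cs))) | tys ss.
        length tys = length cs - 1 \<and> set tys \<subseteq> {..<n} \<and>
        mset ss = mset (path_sibs (subtree_at T a) cs)}"

end

theory Submission
  imports Defs "HOL-Combinatorics.Permutations"
begin

text \<open>
  Write d = e + 1 and p = q + 1. Up to a factor common to the whole shuffle class (the context of
  the path and the subtrees hanging off it), E_H of a member of the class is the product over the
  path vertices v_0, ..., v_{p-1} of the coefficients H_{t_m, mu(v_m)}, where t_m is the type of
  v_m and mu(v_m) counts the type t_{m+1} together with the types of the e siblings at level m.
  So the sum over the class runs over the intermediate types t_1, ..., t_{p-1} and over all
  arrangements of the siblings.

  Now let L list the types of the e p siblings and differentiate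
  (JH)^p_{t_0 t_p} = sum over t_1, ..., t_{p-1} of the products of the entries dH_{t_m}/dX_{t_{m+1}}
  along L. The Leibniz rule distributes the variables of L over the p factors, i.e. sums over the
  colourings of L with p colours. As H is a form of degree d, the constant term of a derivative
  d_A dH_i/dX_j is H_{i, e_j + A} if |A| = e and 0 otherwise, so only colourings using every colour
  e times contribute; these are the rearrangements of the block colouring 0^e 1^e ... (p-1)^e.
  Symmetrising over the permutations of the sibling positions identifies, up to the nonzero order
  of a stabiliser, the constant term with the sum over the shuffle class. It vanishes since
  (JH)^p = 0.
\<close>

section \<open>Formal partial derivatives\<close>

definition occurrences :: "nat list \<Rightarrow> (nat \<Rightarrow>\<^sub>0 nat)" where
  "occurrences L = sum_list (map (\<lambda>j. Poly_Mapping.single j 1) L)"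

lemma occurrences_Nil [simp]: "occurrences [] = 0"
  by (simp add: occurrences_def)

lemma occurrences_Cons [simp]: "occurrences (j # L) = Poly_Mapping.single j 1 + occurrences L"
  by (simp add: occurrences_def)

lemma lookup_occurrences: "Poly_Mapping.lookup (occurrences L) j = count_list L j"
  by (induction L) (simp_all add: lookup_add lookup_single when_def)

lemma occurrences_mset_cong: "mset A = mset B \<Longrightarrow> occurrences A = occurrences B"
  by (rule poly_mapping_eqI) (simp add: lookup_occurrences flip: count_mset)

lemma minus_single_add_commute:
  fixes \<alpha> :: "nat \<Rightarrow>\<^sub>0 nat"
  assumes "Poly_Mapping.lookup \<alpha> j \<noteq> 0"
  shows "\<alpha> - Poly_Mapping.single j 1 + \<gamma> = \<alpha> + \<gamma> - Poly_Mapping.single j 1"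
  using assms by (auto simp: poly_mapping_eq_iff fun_eq_iff lookup_add lookup_minus lookup_single when_def)

lemma minus_single_eq_iff:
  fixes \<alpha> \<beta> :: "nat \<Rightarrow>\<^sub>0 nat"
  assumes "Poly_Mapping.lookup \<alpha> j \<noteq> 0"
  shows "\<alpha> - Poly_Mapping.single j 1 = \<beta> \<longleftrightarrow> \<alpha> = \<beta> + Poly_Mapping.single j 1"
  using assms by (auto simp: poly_mapping_eq_iff fun_eq_iff lookup_add lookup_minus lookup_single when_def)

lemma lookup_pdiff:
  "Poly_Mapping.lookup (pdiff j f) \<beta> =
     Poly_Mapping.lookup f (\<beta> + Poly_Mapping.single j 1) * of_nat (Poly_Mapping.lookup \<beta> j + 1)"
proof -
  let ?e = "Poly_Mapping.single j (1::nat)"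
  have "(Poly_Mapping.lookup f \<alpha> * of_nat (Poly_Mapping.lookup \<alpha> j) when \<alpha> - ?e = \<beta>)
      = (if \<alpha> = \<beta> + ?e then Poly_Mapping.lookup f \<alpha> * of_nat (Poly_Mapping.lookup \<beta> j + 1) else 0)" for \<alpha>
  proof (cases "Poly_Mapping.lookup \<alpha> j = 0")
    case True
    then have "\<alpha> \<noteq> \<beta> + ?e" by (auto simp: lookup_add)
    with True show ?thesis by (simp add: when_def)
  next
    case False
    then show ?thesis by (simp only: minus_single_eq_iff[OF False]) (auto simp: when_def lookup_add)
  qed
  then show ?thesis
    by (simp add: pdiff_def lookup_sum lookup_single sum.delta' in_keys_iff)
qed

lemma pdiff_add: "pdiff j (f + g) = pdiff j f + pdiff j g"
  by (rule poly_mapping_eqI) (simp add: lookup_pdiff lookup_add distrib_right)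

lemma pdiff_0 [simp]: "pdiff j 0 = 0"
  by (rule poly_mapping_eqI) (simp add: lookup_pdiff)

lemma pdiff_sum: "pdiff j (\<Sum>x\<in>S. f x) = (\<Sum>x\<in>S. pdiff j (f x))"
  by (induction S rule: infinite_finite_induct) (simp_all add: pdiff_add)

lemma pdiff_single:
  "pdiff j (Poly_Mapping.single \<alpha> c) =
     Poly_Mapping.single (\<alpha> - Poly_Mapping.single j 1) (c * of_nat (Poly_Mapping.lookup \<alpha> j))"
proof (rule poly_mapping_eqI)
  fix \<beta>
  let ?e = "Poly_Mapping.single j (1::nat)"
  show "Poly_Mapping.lookup (pdiff j (Poly_Mapping.single \<alpha> c)) \<beta> =
    Poly_Mapping.lookup (Poly_Mapping.single (\<alpha> - ?e) (c * of_nat (Poly_Mapping.lookup \<alpha> j))) \<beta>"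
  proof (cases "Poly_Mapping.lookup \<alpha> j = 0")
    case True
    then have "\<alpha> \<noteq> \<beta> + ?e" by (auto simp: lookup_add)
    with True show ?thesis by (simp add: lookup_pdiff lookup_single when_def)
  next
    case False
    then show ?thesis
      by (simp only: lookup_pdiff lookup_single when_def eq_commute[of \<alpha>] minus_single_eq_iff[OF False])
        (auto simp: lookup_add)
  qed
qed

lemma poly_mapping_single_induct [case_names zero single add]:
  fixes f :: "'a \<Rightarrow>\<^sub>0 'b::comm_monoid_add"
  assumes "P 0" "\<And>\<alpha> c. P (Poly_Mapping.single \<alpha> c)" "\<And>f g. P f \<Longrightarrow> P g \<Longrightarrow> P (f + g)"
  shows "P f"
proof -
  have "f = (\<Sum>\<alpha>\<in>Poly_Mapping.keys f. Poly_Mapping.single \<alpha> (Poly_Mapping.lookup f \<alpha>))"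
    by (rule poly_mapping_eqI) (simp add: lookup_sum lookup_single when_def sum.delta in_keys_iff)
  moreover have "P (\<Sum>\<alpha>\<in>A. Poly_Mapping.single \<alpha> (Poly_Mapping.lookup f \<alpha>))" for A
    by (induction A rule: infinite_finite_induct) (simp_all add: assms)
  ultimately show ?thesis by metis
qed

lemma pdiff_mult: "pdiff j (f * g) = pdiff j f * g + f * pdiff j g"
proof (induction f rule: poly_mapping_single_induct)
  case (single \<alpha> a)
  show ?case
  proof (induction g rule: poly_mapping_single_induct)
    case (single \<gamma> b)
    let ?e = "Poly_Mapping.single j (1::nat)"
    let ?m = "\<lambda>c. Poly_Mapping.single (\<alpha> + \<gamma> - ?e) (a * b * of_nat c)"
    have "pdiff j (Poly_Mapping.single \<alpha> a) * Poly_Mapping.single \<gamma> b = ?m (Poly_Mapping.lookup \<alpha> j)"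
    proof (cases "Poly_Mapping.lookup \<alpha> j = 0")
      case False
      then show ?thesis
        by (simp only: pdiff_single mult_single minus_single_add_commute[OF False]) (simp add: mult_ac)
    qed (simp add: pdiff_single)
    moreover have "Poly_Mapping.single \<alpha> a * pdiff j (Poly_Mapping.single \<gamma> b) = ?m (Poly_Mapping.lookup \<gamma> j)"
    proof (cases "Poly_Mapping.lookup \<gamma> j = 0")
      case False
      then show ?thesis
        by (simp only: pdiff_single mult_single add.commute[of \<alpha>] minus_single_add_commute[OF False])
          (simp add: mult_ac)
    qed (simp add: pdiff_single)
    ultimately show ?case
      by (simp add: pdiff_single mult_single lookup_add distrib_left single_add)
  qed (simp_all add: pdiff_add distrib_left distrib_right)
qed (simp_all add: pdiff_add distrib_left distrib_right)

lemma pdiff_1 [simp]: "pdiff j 1 = 0"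
  using pdiff_single[of j 0 1] by simp

lemma pdiff_prod:
  assumes "finite S"
  shows "pdiff j (\<Prod>m\<in>S. g m) = (\<Sum>c\<in>S. \<Prod>m\<in>S. if m = c then pdiff j (g m) else g m)"
  using assms
proof (induction S rule: finite_induct)
  case (insert x F)
  have "(\<Prod>m\<in>F. if m = x then pdiff j (g m) else g m) = (\<Prod>m\<in>F. g m)"
    using insert.hyps by (intro prod.cong) auto
  moreover have "(\<Sum>c\<in>F. (if x = c then pdiff j (g x) else g x) * (\<Prod>m\<in>F. if m = c then pdiff j (g m) else g m))
      = (\<Sum>c\<in>F. g x * (\<Prod>m\<in>F. if m = c then pdiff j (g m) else g m))"
    using insert.hyps by (intro sum.cong) auto
  ultimately show ?case
    using insert by (simp add: pdiff_mult sum_distrib_left)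
qed simp

lemma poly_mapping_add_eq_0_iff:
  fixes \<alpha> \<gamma> :: "'a \<Rightarrow>\<^sub>0 nat"
  shows "\<alpha> + \<gamma> = 0 \<longleftrightarrow> \<alpha> = 0 \<and> \<gamma> = 0"
  by (auto simp: poly_mapping_eq_iff fun_eq_iff lookup_add)

lemma lookup_mult_0:
  "Poly_Mapping.lookup (f * g :: cpoly) 0 = Poly_Mapping.lookup f 0 * Poly_Mapping.lookup g 0"
proof (induction f rule: poly_mapping_single_induct)
  case (single \<alpha> a)
  show ?case
    by (induction g rule: poly_mapping_single_induct)
      (simp_all add: mult_single lookup_single when_def poly_mapping_add_eq_0_iff
        distrib_left lookup_add)
qed (simp_all add: distrib_right lookup_add)

lemma lookup_prod_0:
  "Poly_Mapping.lookup (\<Prod>m\<in>S. f m :: cpoly) 0 = (\<Prod>m\<in>S. Poly_Mapping.lookup (f m) 0)"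
  by (induction S rule: infinite_finite_induct) (simp_all add: lookup_mult_0)

fun pdiffs :: "nat list \<Rightarrow> cpoly \<Rightarrow> cpoly" where
  "pdiffs [] f = f"
| "pdiffs (j # L) f = pdiff j (pdiffs L f)"

lemma pdiffs_append: "pdiffs (A @ B) f = pdiffs A (pdiffs B f)"
  by (induction A) simp_all

lemma pdiffs_0 [simp]: "pdiffs L 0 = 0"
  by (induction L) simp_all

lemma pdiffs_sum: "pdiffs L (\<Sum>x\<in>S. f x) = (\<Sum>x\<in>S. pdiffs L (f x))"
  by (induction L) (simp_all add: pdiff_sum)

lemma mfact_add_single:
  assumes "j < n"
  shows "mfact n (\<beta> + Poly_Mapping.single j 1) = (Poly_Mapping.lookup \<beta> j + 1) * mfact n \<beta>"
proof -
  have "mfact n (\<beta> + Poly_Mapping.single j 1)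
      = (\<Prod>k<n. (if k = j then Poly_Mapping.lookup \<beta> j + 1 else 1) * fact (Poly_Mapping.lookup \<beta> k))"
    unfolding mfact_def by (intro prod.cong) (auto simp: lookup_add lookup_single)
  then show ?thesis
    using assms by (simp add: prod.distrib prod.delta mfact_def)
qed

lemma lookup_pdiffs:
  assumes "set L \<subseteq> {..<n}"
  shows "Poly_Mapping.lookup (pdiffs L f) \<beta> * of_nat (mfact n \<beta>)
    = Poly_Mapping.lookup f (\<beta> + occurrences L) * of_nat (mfact n (\<beta> + occurrences L))"
  using assms
proof (induction L arbitrary: \<beta>)
  case (Cons j L)
  then have j: "j < n" by simp
  have "Poly_Mapping.lookup (pdiffs (j # L) f) \<beta> * of_nat (mfact n \<beta>)
      = Poly_Mapping.lookup (pdiffs L f) (\<beta> + Poly_Mapping.single j 1)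
        * (of_nat (Poly_Mapping.lookup \<beta> j + 1) * of_nat (mfact n \<beta>))"
    by (simp only: pdiffs.simps lookup_pdiff mult.assoc)
  also have "\<dots> = Poly_Mapping.lookup (pdiffs L f) (\<beta> + Poly_Mapping.single j 1)
        * of_nat (mfact n (\<beta> + Poly_Mapping.single j 1))"
    by (simp only: mfact_add_single[OF j] of_nat_mult)
  also have "\<dots> = Poly_Mapping.lookup f (\<beta> + occurrences (j # L)) * of_nat (mfact n (\<beta> + occurrences (j # L)))"
    using Cons by (simp add: add.assoc)
  finally show ?case .
qed simp

lemma finite_multi_idx: "finite (multi_idx n d)"
proof -
  have "Poly_Mapping.lookup \<alpha> x \<in> {..d}" if "\<alpha> \<in> multi_idx n d" "x < n" for \<alpha> x
  proof -
    have "Poly_Mapping.lookup \<alpha> x \<le> (\<Sum>j<n. Poly_Mapping.lookup \<alpha> j)"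
      using that(2) by (intro member_le_sum) auto
    then show ?thesis using that(1) by (simp add: multi_idx_def)
  qed
  then have "Poly_Mapping.lookup ` multi_idx n d \<subseteq>
      {f. \<forall>x. (x \<in> {..<n} \<longrightarrow> f x \<in> {..d}) \<and> (x \<notin> {..<n} \<longrightarrow> f x = 0)}"
    by (auto simp: multi_idx_def in_keys_iff)
  then have "finite (Poly_Mapping.lookup ` multi_idx n d)"
    by (rule finite_subset) (intro finite_set_of_finite_funs; simp)
  then show ?thesis
    by (rule finite_imageD) (auto intro: inj_onI simp: poly_mapping.lookup_inject)
qed

lemma lookup_Hpoly:
  "Poly_Mapping.lookup (Hpoly n d Hc i) \<alpha> =
     (if \<alpha> \<in> multi_idx n d then Hc i \<alpha> / of_nat (mfact n \<alpha>) else 0)"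
  by (simp add: Hpoly_def lookup_sum lookup_single when_def finite_multi_idx sum.delta)

lemma occurrences_in_multi_idx_iff:
  assumes "set L \<subseteq> {..<n}"
  shows "occurrences L \<in> multi_idx n d \<longleftrightarrow> length L = d"
proof -
  have "Poly_Mapping.keys (occurrences L) \<subseteq> {..<n}"
    using assms by (auto simp: in_keys_iff lookup_occurrences count_list_0_iff)
  moreover have "(\<Sum>j<n. Poly_Mapping.lookup (occurrences L) j) = length L"
    using assms by (simp add: lookup_occurrences sum_count_set)
  ultimately show ?thesis by (simp add: multi_idx_def)
qed

lemma lookup_pdiffs_jac_0:
  assumes "set A \<subseteq> {..<n}" "j < n"
  shows "Poly_Mapping.lookup (pdiffs A (jac n d Hc i j)) 0 =
    (if Suc (length A) = d then Hc i (occurrences (j # A)) else 0)"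
proof -
  have L: "set (A @ [j]) \<subseteq> {..<n}" and jA: "set (j # A) \<subseteq> {..<n}"
    using assms by auto
  have "occurrences (A @ [j]) = occurrences (j # A)"
    by (rule occurrences_mset_cong) simp
  then have "Poly_Mapping.lookup (pdiffs A (jac n d Hc i j)) 0
      = Poly_Mapping.lookup (Hpoly n d Hc i) (occurrences (j # A)) * of_nat (mfact n (occurrences (j # A)))"
    using lookup_pdiffs[OF L, of "Hpoly n d Hc i" 0] by (simp add: jac_def pdiffs_append mfact_def)
  moreover have "mfact n \<alpha> \<noteq> 0" for \<alpha>
    by (simp add: mfact_def)
  ultimately show ?thesis
    using occurrences_in_multi_idx_iff[OF jA, of d] by (simp add: lookup_Hpoly)
qed

section \<open>The Leibniz rule over colourings\<close>

definition words :: "nat \<Rightarrow> nat \<Rightarrow> nat list set" where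
  "words N p = {w. set w \<subseteq> {..<p} \<and> length w = N}"

lemma finite_words [simp]: "finite (words N p)"
  by (simp add: words_def finite_lists_length_eq)

lemma words_0 [simp]: "words 0 p = {[]}"
  by (auto simp: words_def)

lemma sum_words_Suc:
  "(\<Sum>w\<in>words (Suc N) p. g w) = (\<Sum>c<p. \<Sum>w\<in>words N p. g (c # w))"
  unfolding words_def lists_length_Suc_eq
  by (simp add: sum.reindex inj_split_Cons prod.case_distrib sum.cartesian_product[symmetric]
      sum.swap[of _ "{..<p}"])

lemma sum_words_Suc_snoc:
  "(\<Sum>w\<in>words (Suc N) p. g w) = (\<Sum>w\<in>words N p. \<Sum>c<p. g (w @ [c]))"
proof -
  have "words (Suc N) p = (\<lambda>(w, c). w @ [c]) ` (words N p \<times> {..<p})"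
    by (auto simp: words_def length_Suc_conv_rev image_iff)
  moreover have "inj_on (\<lambda>(w, c). w @ [c]) X" for X :: "(nat list \<times> nat) set"
    by (auto intro: inj_onI)
  ultimately show ?thesis
    by (simp add: sum.reindex prod.case_distrib sum.cartesian_product)
qed

definition colour_class :: "'a list \<Rightarrow> nat list \<Rightarrow> nat \<Rightarrow> 'a list" where
  "colour_class L w m = map fst (filter (\<lambda>(x, c). c = m) (zip L w))"

lemma colour_class_Nil [simp]: "colour_class [] w m = []"
  by (simp add: colour_class_def)

lemma colour_class_Cons [simp]:
  "colour_class (x # L) (c # w) m = (if c = m then x # colour_class L w m else colour_class L w m)"
  by (simp add: colour_class_def)

lemma set_colour_class: "set (colour_class L w m) \<subseteq> set L"
  by (auto simp: colour_class_def dest: set_zip_leftD)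

lemma pdiffs_prod:
  "pdiffs L (\<Prod>m<p. f m) = (\<Sum>w\<in>words (length L) p. \<Prod>m<p. pdiffs (colour_class L w m) (f m))"
proof (induction L)
  case (Cons j L)
  have "pdiffs (j # L) (\<Prod>m<p. f m)
      = (\<Sum>w\<in>words (length L) p. \<Sum>c<p. \<Prod>m<p. if m = c then pdiff j (pdiffs (colour_class L w m) (f m))
           else pdiffs (colour_class L w m) (f m))"
    by (simp add: Cons.IH pdiff_sum pdiff_prod)
  also have "\<dots> = (\<Sum>w\<in>words (length L) p. \<Sum>c<p. \<Prod>m<p. pdiffs (colour_class (j # L) (c # w) m) (f m))"
    by (intro sum.cong prod.cong) auto
  finally show ?case
    by (simp add: sum_words_Suc sum.swap[of _ "{..<p}"])
qed simp

lemma jac_pow_Suc_eq_sum_words: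
  assumes "i < n"
  shows "jac_pow n d Hc (Suc q) i j =
    (\<Sum>tys\<in>words q n. \<Prod>m<Suc q. jac n d Hc ((i # tys @ [j]) ! m) ((i # tys @ [j]) ! Suc m))"
proof (induction q arbitrary: j)
  case 0
  have "jac_pow n d Hc (Suc 0) i j = (\<Sum>l<n. if l = i then jac n d Hc l j else 0)"
    unfolding jac_pow.simps by (intro sum.cong) auto
  then show ?case
    using assms by simp
next
  case (Suc q)
  let ?J = "jac n d Hc"
  have "jac_pow n d Hc (Suc (Suc q)) i j = (\<Sum>l<n. jac_pow n d Hc (Suc q) i l * ?J l j)"
    by (rule jac_pow.simps(2))
  also have "\<dots> = (\<Sum>l<n. \<Sum>tys\<in>words q n.
      (\<Prod>m<Suc q. ?J ((i # tys @ [l]) ! m) ((i # tys @ [l]) ! Suc m)) * ?J l j)"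
    by (simp only: Suc.IH sum_distrib_right)
  also have "\<dots> = (\<Sum>tys\<in>words q n. \<Sum>l<n.
      (\<Prod>m<Suc q. ?J ((i # tys @ [l]) ! m) ((i # tys @ [l]) ! Suc m)) * ?J l j)"
    by (rule sum.swap)
  also have "\<dots> = (\<Sum>tys\<in>words q n. \<Sum>l<n.
      \<Prod>m<Suc (Suc q). ?J ((i # (tys @ [l]) @ [j]) ! m) ((i # (tys @ [l]) @ [j]) ! Suc m))"
  proof (intro sum.cong refl)
    fix tys l assume "tys \<in> words q n"
    then have len: "length tys = q" by (simp add: words_def)
    let ?vs = "i # tys @ [l]"
    have "(\<Prod>m<Suc (Suc q). ?J ((?vs @ [j]) ! m) ((?vs @ [j]) ! Suc m))
        = (\<Prod>m<Suc q. ?J ((?vs @ [j]) ! m) ((?vs @ [j]) ! Suc m))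
          * ?J ((?vs @ [j]) ! Suc q) ((?vs @ [j]) ! Suc (Suc q))"
      by (rule prod.lessThan_Suc)
    also have "\<dots> = (\<Prod>m<Suc q. ?J (?vs ! m) (?vs ! Suc m)) * ?J l j"
      using len by (intro arg_cong2[where f = "(*)"] prod.cong refl) (auto simp: nth_append nth_Cons')
    finally show "(\<Prod>m<Suc q. ?J (?vs ! m) (?vs ! Suc m)) * ?J l j
        = (\<Prod>m<Suc (Suc q). ?J ((i # (tys @ [l]) @ [j]) ! m) ((i # (tys @ [l]) @ [j]) ! Suc m))"
      by simp
  qed
  finally show ?case
    by (simp only: sum_words_Suc_snoc)
qed

text \<open>
  vs lists the types of the path vertices v_0, ..., v_p and A m the types of the off-path children
  of v_m. A path vertex with other than d children gets weight 0, matching the constant term of a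
  derivative of the degree d form H.
\<close>

definition path_weight ::
    "(nat \<Rightarrow> (nat \<Rightarrow>\<^sub>0 nat) \<Rightarrow> complex) \<Rightarrow> nat \<Rightarrow> nat list \<Rightarrow> (nat \<Rightarrow> nat list) \<Rightarrow> nat \<Rightarrow> complex" where
  "path_weight Hc d vs A p =
     (\<Prod>m<p. if Suc (length (A m)) = d then Hc (vs ! m) (occurrences (vs ! Suc m # A m)) else 0)"

text \<open>The left-hand side is the constant term of d_L (JH)^p_{ij}.\<close>

lemma sum_words_path_weight_eq_0:
  assumes "jac_nilpotent_pow n d Hc (Suc q)" "i < n" "j < n" "set L \<subseteq> {..<n}"
  shows "(\<Sum>tys\<in>words q n. \<Sum>w\<in>words (length L) (Suc q).
      path_weight Hc d (i # tys @ [j]) (colour_class L w) (Suc q)) = 0"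
proof -
  have "jac_pow n d Hc (Suc q) i j = 0"
    using assms(1-3) unfolding jac_nilpotent_pow_def by blast
  then have "0 = Poly_Mapping.lookup (pdiffs L (jac_pow n d Hc (Suc q) i j)) 0"
    by (simp only: pdiffs_0 lookup_zero)
  also have "\<dots> = (\<Sum>tys\<in>words q n. \<Sum>w\<in>words (length L) (Suc q). \<Prod>m<Suc q.
      Poly_Mapping.lookup (pdiffs (colour_class L w m) (jac n d Hc ((i # tys @ [j]) ! m) ((i # tys @ [j]) ! Suc m))) 0)"
    unfolding jac_pow_Suc_eq_sum_words[OF assms(2)] pdiffs_sum lookup_sum pdiffs_prod lookup_prod_0 ..
  also have "\<dots> = (\<Sum>tys\<in>words q n. \<Sum>w\<in>words (length L) (Suc q).
      path_weight Hc d (i # tys @ [j]) (colour_class L w) (Suc q))"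
    unfolding path_weight_def
  proof (rule sum.cong[OF refl], rule sum.cong[OF refl], rule prod.cong[OF refl])
    fix tys w m assume "tys \<in> words q n" "m \<in> {..<Suc q}"
    then have "(i # tys @ [j]) ! Suc m \<in> set (i # tys @ [j])"
      by (intro nth_mem) (simp add: words_def)
    then have "(i # tys @ [j]) ! Suc m < n"
      using \<open>tys \<in> words q n\<close> assms(2,3) by (auto simp: words_def)
    moreover have "set (colour_class L w m) \<subseteq> {..<n}"
      by (rule order_trans[OF set_colour_class assms(4)])
    ultimately show "Poly_Mapping.lookup (pdiffs (colour_class L w m)
        (jac n d Hc ((i # tys @ [j]) ! m) ((i # tys @ [j]) ! Suc m))) 0 =
      (if Suc (length (colour_class L w m)) = d
       then Hc ((i # tys @ [j]) ! m) (occurrences ((i # tys @ [j]) ! Suc m # colour_class L w m)) else 0)"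
      by (simp add: lookup_pdiffs_jac_0)
  qed
  finally show ?thesis by simp
qed

section \<open>Symmetrisation over block colourings\<close>

primrec block_colouring :: "nat \<Rightarrow> nat \<Rightarrow> nat list" where
  "block_colouring e 0 = []"
| "block_colouring e (Suc p) = replicate e 0 @ map Suc (block_colouring e p)"

lemma length_block_colouring [simp]: "length (block_colouring e p) = e * p"
  by (induction p) simp_all

lemma set_block_colouring: "set (block_colouring e p) \<subseteq> {..<p}"
  by (induction p) auto

lemma colour_class_append:
  "length L = length u \<Longrightarrow> colour_class (L @ L') (u @ v) m = colour_class L u m @ colour_class L' v m"
  by (simp add: colour_class_def)

lemma colour_class_replicate:
  "length L = k \<Longrightarrow> colour_class L (replicate k c) m = (if c = m then L else [])"
  by (induction L arbitrary: k) auto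

lemma colour_class_map_Suc:
  "colour_class L (map Suc w) 0 = []" "colour_class L (map Suc w) (Suc m) = colour_class L w m"
  by (simp_all add: colour_class_def zip_map2 filter_map o_def case_prod_unfold)

lemma colour_class_block_colouring:
  "length L = e * p \<Longrightarrow> m < p \<Longrightarrow> colour_class L (block_colouring e p) m = take e (drop (e * m) L)"
proof (induction p arbitrary: L m)
  case (Suc p)
  note IH = Suc.IH and prems = Suc.prems
  have "length (take e L) = e"
    using prems by simp
  then have split: "colour_class L (block_colouring e (Suc p)) m
      = (if m = 0 then take e L else []) @ colour_class (drop e L) (map Suc (block_colouring e p)) m"
    using colour_class_append[of "take e L" "replicate e 0" "drop e L" "map Suc (block_colouring e p)" m]
    by (simp add: colour_class_replicate)
  show ?case
  proof (cases m)
    case 0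
    show ?thesis
      unfolding split using 0 by (simp add: colour_class_map_Suc)
  next
    case (Suc m')
    have "colour_class (drop e L) (block_colouring e p) m' = take e (drop (e * m') (drop e L))"
      using IH prems Suc by simp
    then show ?thesis
      unfolding split using Suc by (simp add: colour_class_map_Suc add.commute)
  qed
qed simp

lemma length_colour_class: "length L = length w \<Longrightarrow> length (colour_class L w m) = count (mset w) m"
  by (induction L w rule: list_induct2) auto

lemma count_block_colouring: "count (mset (block_colouring e p)) m = (if m < p then e else 0)"
proof (cases "m < p")
  case True
  then have "e * 1 \<le> e * (p - m)"
    by (intro mult_le_mono2) simp
  then have "e \<le> e * p - e * m"
    by (simp add: diff_mult_distrib2)
  then show ?thesis
    using True length_colour_class[of "block_colouring e p" "block_colouring e p" m]
    by (simp add: colour_class_block_colouring)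
next
  case False
  then show ?thesis
    using set_block_colouring[of e p] by (auto simp: count_eq_zero_iff)
qed

lemma mset_colour_class_permute_list:
  assumes "\<sigma> permutes {..<length L}" "length w = length L"
  shows "mset (colour_class (permute_list \<sigma> L) (permute_list \<sigma> w) m) = mset (colour_class L w m)"
proof -
  have "zip (permute_list \<sigma> L) (permute_list \<sigma> w) = permute_list \<sigma> (zip L w)"
    using assms by (simp add: permute_list_zip)
  moreover have "\<sigma> permutes {..<length (zip L w)}"
    using assms by simp
  ultimately show ?thesis
    by (simp only: colour_class_def mset_map mset_filter mset_permute_list)
qed

lemma path_weight_mset_cong:
  assumes "\<And>m. m < p \<Longrightarrow> mset (A m) = mset (B m)"
  shows "path_weight Hc d vs A p = path_weight Hc d vs B p"
proof -
  have "length (A m) = length (B m)" "occurrences (x # A m) = occurrences (x # B m)" if "m < p" for m x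
    using assms[OF that] by (auto intro: mset_eq_length occurrences_mset_cong)
  then show ?thesis
    unfolding path_weight_def by (intro prod.cong refl) simp
qed

lemma card_permute_list_fibre:
  assumes "\<pi>\<^sub>0 permutes {..<length xs}"
  shows "card {\<pi>. \<pi> permutes {..<length xs} \<and> permute_list \<pi> xs = permute_list \<pi>\<^sub>0 xs}
       = card {\<sigma>. \<sigma> permutes {..<length xs} \<and> permute_list \<sigma> xs = xs}"
proof -
  let ?S = "{\<sigma>. \<sigma> permutes {..<length xs} \<and> permute_list \<sigma> xs = xs}"
  have "{\<pi>. \<pi> permutes {..<length xs} \<and> permute_list \<pi> xs = permute_list \<pi>\<^sub>0 xs} = (\<lambda>\<sigma>. \<sigma> \<circ> \<pi>\<^sub>0) ` ?S"
  proof (intro equalityI subsetI)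
    fix \<pi> assume "\<pi> \<in> {\<pi>. \<pi> permutes {..<length xs} \<and> permute_list \<pi> xs = permute_list \<pi>\<^sub>0 xs}"
    then have \<pi>: "\<pi> permutes {..<length xs}" "permute_list \<pi> xs = permute_list \<pi>\<^sub>0 xs"
      by auto
    have inv: "inv \<pi>\<^sub>0 permutes {..<length xs}"
      using assms by (rule permutes_inv)
    have "permute_list (\<pi> \<circ> inv \<pi>\<^sub>0) xs = permute_list (\<pi>\<^sub>0 \<circ> inv \<pi>\<^sub>0) xs"
      using inv \<pi>(2) by (simp add: permute_list_compose)
    then have "\<pi> \<circ> inv \<pi>\<^sub>0 \<in> ?S"
      using permutes_compose[OF inv \<pi>(1)] permutes_inv_o(1)[OF assms] by simp
    moreover have "\<pi> = \<pi> \<circ> inv \<pi>\<^sub>0 \<circ> \<pi>\<^sub>0"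
      using permutes_inv_o(2)[OF assms] by (simp add: o_assoc[symmetric])
    ultimately show "\<pi> \<in> (\<lambda>\<sigma>. \<sigma> \<circ> \<pi>\<^sub>0) ` ?S"
      by blast
  qed (use assms in \<open>auto simp: permute_list_compose intro: permutes_compose\<close>)
  moreover have "inj_on (\<lambda>\<sigma>. \<sigma> \<circ> \<pi>\<^sub>0) ?S"
  proof (rule inj_onI)
    fix \<sigma> \<sigma>' assume "\<sigma> \<circ> \<pi>\<^sub>0 = \<sigma>' \<circ> \<pi>\<^sub>0"
    then have "\<sigma> \<circ> (\<pi>\<^sub>0 \<circ> inv \<pi>\<^sub>0) = \<sigma>' \<circ> (\<pi>\<^sub>0 \<circ> inv \<pi>\<^sub>0)"
      by (simp add: o_assoc)
    then show "\<sigma> = \<sigma>'"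
      by (simp add: permutes_inv_o(1)[OF assms])
  qed
  ultimately show ?thesis
    by (simp add: card_image)
qed

lemma sum_permutations_permute_list:
  fixes g :: "'a list \<Rightarrow> 'b::semiring_1"
  shows "(\<Sum>\<pi> | \<pi> permutes {..<length xs}. g (permute_list \<pi> xs))
       = of_nat (card {\<sigma>. \<sigma> permutes {..<length xs} \<and> permute_list \<sigma> xs = xs})
         * (\<Sum>ys | mset ys = mset xs. g ys)"
proof -
  let ?P = "{\<pi>. \<pi> permutes {..<length xs}}"
  have image: "(\<lambda>\<pi>. permute_list \<pi> xs) ` ?P = {ys. mset ys = mset xs}"
    by (auto elim!: mset_eq_permutation[of _ xs] simp: mset_permute_list)
  have "(\<Sum>\<pi>\<in>?P. g (permute_list \<pi> xs))
      = (\<Sum>ys\<in>{ys. mset ys = mset xs}. \<Sum>\<pi> | \<pi> \<in> ?P \<and> permute_list \<pi> xs = ys. g (permute_list \<pi> xs))"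
    unfolding image[symmetric] by (rule sum.image_gen[OF finite_permutations[OF finite_lessThan]])
  also have "\<dots> = (\<Sum>ys\<in>{ys. mset ys = mset xs}. \<Sum>\<pi> | \<pi> \<in> ?P \<and> permute_list \<pi> xs = ys. g ys)"
    by (rule sum.cong[OF refl], rule sum.cong[OF refl]) simp
  also have "\<dots> = (\<Sum>ys\<in>{ys. mset ys = mset xs}.
      of_nat (card {\<sigma>. \<sigma> permutes {..<length xs} \<and> permute_list \<sigma> xs = xs}) * g ys)"
  proof (rule sum.cong[OF refl])
    fix ys assume "ys \<in> {ys. mset ys = mset xs}"
    then obtain \<pi>\<^sub>0 where "\<pi>\<^sub>0 permutes {..<length xs}" "ys = permute_list \<pi>\<^sub>0 xs"
      using image by blast
    then show "(\<Sum>\<pi> | \<pi> \<in> ?P \<and> permute_list \<pi> xs = ys. g ys)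
        = of_nat (card {\<sigma>. \<sigma> permutes {..<length xs} \<and> permute_list \<sigma> xs = xs}) * g ys"
      using card_permute_list_fibre[of \<pi>\<^sub>0 xs] by simp
  qed
  finally show ?thesis
    by (simp only: sum_distrib_left)
qed

lemma path_weight_colour_class_eq_0:
  assumes "w \<in> words (length L) p" "length L = e * p" "mset w \<noteq> mset (block_colouring e p)"
  shows "path_weight Hc (Suc e) vs (colour_class L w) p = 0"
proof (rule ccontr)
  assume "path_weight Hc (Suc e) vs (colour_class L w) p \<noteq> 0"
  then have "length (colour_class L w m) = e" if "m < p" for m
    using that by (auto simp: path_weight_def split: if_splits)
  moreover have "length L = length w" "set w \<subseteq> {..<p}"
    using assms(1) by (auto simp: words_def)
  ultimately have "count (mset w) m = count (mset (block_colouring e p)) m" for m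
    by (cases "m < p") (auto simp: length_colour_class count_block_colouring count_eq_zero_iff)
  then show False
    using assms(3) by (simp add: multiset_eq_iff)
qed

lemma sum_block_arrangements_path_weight_eq_0:
  assumes "jac_nilpotent_pow n (Suc e) Hc (Suc q)" "i < n" "j < n" "set L \<subseteq> {..<n}"
    and "length L = e * Suc q"
  shows "(\<Sum>w | mset w = mset (block_colouring e (Suc q)). \<Sum>tys\<in>words q n.
      path_weight Hc (Suc e) (i # tys @ [j]) (colour_class L w) (Suc q)) = 0"
proof -
  let ?W = "words (length L) (Suc q)"
  have "{w. mset w = mset (block_colouring e (Suc q))} \<subseteq> ?W"
    using set_block_colouring[of e "Suc q"] assms(5)
    by (auto simp: words_def simp del: block_colouring.simps dest: mset_eq_setD mset_eq_length)
  then have "(\<Sum>w | mset w = mset (block_colouring e (Suc q)). \<Sum>tys\<in>words q n.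
        path_weight Hc (Suc e) (i # tys @ [j]) (colour_class L w) (Suc q))
      = (\<Sum>w\<in>?W. \<Sum>tys\<in>words q n. path_weight Hc (Suc e) (i # tys @ [j]) (colour_class L w) (Suc q))"
    using path_weight_colour_class_eq_0[OF _ assms(5)]
    by (intro sum.mono_neutral_left) auto
  also have "\<dots> = 0"
    using sum_words_path_weight_eq_0[OF assms(1-4)] by (simp add: sum.swap[of _ ?W])
  finally show ?thesis .
qed

lemma symmetrised_path_weight_eq_0:
  assumes "jac_nilpotent_pow n (Suc e) Hc (Suc q)" "i < n" "j < n" "set L \<subseteq> {..<n}"
    and len: "length L = e * Suc q"
  shows "(\<Sum>\<pi> | \<pi> permutes {..<length L}. \<Sum>tys\<in>words q n.
      path_weight Hc (Suc e) (i # tys @ [j]) (\<lambda>m. take e (drop (e * m) (permute_list \<pi> L))) (Suc q)) = 0"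
proof -
  let ?w\<^sub>0 = "block_colouring e (Suc q)"
  let ?P = "{\<pi>. \<pi> permutes {..<length L}}"
  define \<Phi> where "\<Phi> w = (\<Sum>tys\<in>words q n. path_weight Hc (Suc e) (i # tys @ [j]) (colour_class L w) (Suc q))"
    for w
  have len\<^sub>0: "length ?w\<^sub>0 = length L"
    using len by simp
  \<comment> \<open>The blocks of permute_list \<pi> L are the colour classes of L under the block colouring permuted by inv \<pi>.\<close>
  have "mset (take e (drop (e * m) (permute_list \<pi> L))) = mset (colour_class L (permute_list (inv \<pi>) ?w\<^sub>0) m)"
    if \<pi>: "\<pi> permutes {..<length L}" and m: "m < Suc q" for \<pi> m
  proof -
    have inv: "inv \<pi> permutes {..<length L}"
      using \<pi> by (rule permutes_inv)
    have "permute_list (inv \<pi>) (permute_list \<pi> L) = L"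
      using permute_list_compose[OF inv, of \<pi>] permutes_inv_o(1)[OF \<pi>] by simp
    moreover have "take e (drop (e * m) (permute_list \<pi> L)) = colour_class (permute_list \<pi> L) ?w\<^sub>0 m"
      using colour_class_block_colouring[of "permute_list \<pi> L" e "Suc q" m] len m by simp
    ultimately show ?thesis
      using mset_colour_class_permute_list[of "inv \<pi>" "permute_list \<pi> L" ?w\<^sub>0 m] inv len\<^sub>0 by simp
  qed
  then have "(\<Sum>\<pi>\<in>?P. \<Sum>tys\<in>words q n.
      path_weight Hc (Suc e) (i # tys @ [j]) (\<lambda>m. take e (drop (e * m) (permute_list \<pi> L))) (Suc q))
      = (\<Sum>\<pi>\<in>?P. \<Phi> (permute_list (inv \<pi>) ?w\<^sub>0))"
    unfolding \<Phi>_def by (intro sum.cong refl path_weight_mset_cong) auto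
  also have "\<dots> = (\<Sum>\<pi>\<in>?P. \<Phi> (permute_list \<pi> ?w\<^sub>0))"
    by (rule sum_permutations_inverse[symmetric])
  also have "\<dots> = of_nat (card {\<sigma>. \<sigma> permutes {..<length L} \<and> permute_list \<sigma> ?w\<^sub>0 = ?w\<^sub>0})
      * (\<Sum>w | mset w = mset ?w\<^sub>0. \<Phi> w)"
    using sum_permutations_permute_list[of \<Phi> ?w\<^sub>0] by (simp only: len\<^sub>0)
  also have "(\<Sum>w | mset w = mset ?w\<^sub>0. \<Phi> w) = 0"
    unfolding \<Phi>_def by (rule sum_block_arrangements_path_weight_eq_0[OF assms])
  finally show ?thesis
    by simp
qed

section \<open>Shuffle classes\<close>

lemma subtree_at_append: "subtree_at T (a @ b) = subtree_at (subtree_at T a) b"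
proof (induction a arbitrary: T)
  case (Cons c a) then show ?case by (cases T) simp
qed simp

lemma valid_addr_append: "valid_addr T (a @ b) \<longleftrightarrow> valid_addr T a \<and> valid_addr (subtree_at T a) b"
proof (induction a arbitrary: T)
  case (Cons c a) then show ?case by (cases T) auto
qed simp

lemma d_catalan_subtree_at: "valid_addr T a \<Longrightarrow> d_catalan d T \<Longrightarrow> d_catalan d (subtree_at T a)"
proof (induction a arbitrary: T)
  case (Cons c a) then show ?case by (cases T) auto
qed simp

lemma n_type_subtree_at: "valid_addr T a \<Longrightarrow> n_type n T \<Longrightarrow> n_type n (subtree_at T a)"
proof (induction a arbitrary: T)
  case (Cons c a) then show ?case by (cases T) auto
qed simp

lemma n_type_root_type: "n_type n T \<Longrightarrow> root_type T < n"
  by (cases T) simp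

lemma root_type_replace_at:
  "root_type s = root_type (subtree_at T a) \<Longrightarrow> root_type (replace_at T a s) = root_type T"
  by (cases a; cases T) auto

lemma subtree_at_replace_at: "valid_addr T a \<Longrightarrow> subtree_at (replace_at T a s) a = s"
proof (induction a arbitrary: T)
  case (Cons c a) then show ?case by (cases T) auto
qed simp

lemma mu_eq_occurrences: "mu ts = occurrences (map root_type ts)"
  by (simp add: mu_def occurrences_def o_def)

lemma EH_replace_at:
  assumes "valid_addr T a"
  obtains C where "\<And>s. root_type s = root_type (subtree_at T a) \<Longrightarrow> EH Hc (replace_at T a s) = C * EH Hc s"
  using assms
proof (induction a arbitrary: T thesis)
  case Nil
  then show ?case by (metis mult_1 replace_at.simps(1))
next
  case (Cons c a)
  obtain i ts where T: "T = Nd i ts" by (cases T)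
  have c: "c < length ts" and v: "valid_addr (ts ! c) a"
    using Cons.prems T by auto
  obtain C where C: "\<And>s. root_type s = root_type (subtree_at (ts ! c) a) \<Longrightarrow>
      EH Hc (replace_at (ts ! c) a s) = C * EH Hc s"
    using Cons.IH[OF _ v] by blast
  let ?rest = "Hc i (mu ts) * prod_list (map (EH Hc) (take c ts)) * prod_list (map (EH Hc) (drop (Suc c) ts))"
  have "EH Hc (replace_at T (c # a) s) = ?rest * C * EH Hc s"
    if s: "root_type s = root_type (subtree_at T (c # a))" for s
  proof -
    let ?X = "replace_at (ts ! c) a s"
    have "root_type ?X = root_type (ts ! c)"
      using s T by (simp add: root_type_replace_at)
    then have "map root_type (ts[c := ?X]) = map root_type ts"
      using c by (metis list_update_id map_update nth_map)
    then have "mu (ts[c := ?X]) = mu ts"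
      by (simp add: mu_eq_occurrences)
    moreover have "prod_list (map (EH Hc) (ts[c := ?X]))
        = prod_list (map (EH Hc) (take c ts)) * EH Hc ?X * prod_list (map (EH Hc) (drop (Suc c) ts))"
      using c by (simp add: upd_conv_take_nth_drop)
    ultimately show ?thesis
      using T c C s by (auto simp: mult_ac)
  qed
  then show ?case
    using Cons.prems(1) by (metis mult.assoc)
qed

lemma length_path_sibs:
  "d_catalan d T \<Longrightarrow> valid_addr T cs \<Longrightarrow> length (path_sibs T cs) = (d - 1) * length cs"
proof (induction cs arbitrary: T)
  case (Cons c cs)
  then obtain i ts where T: "T = Nd i ts" "c < length ts" "length ts = d"
    by (cases T) auto
  then show ?case
    using Cons by simp
qed simp

lemma path_positions_less_arity:
  "d_catalan d T \<Longrightarrow> valid_addr T cs \<Longrightarrow> c \<in> set cs \<Longrightarrow> c < d"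
proof (induction cs arbitrary: T)
  case (Cons c' cs)
  then obtain i ts where T: "T = Nd i ts" "c' < length ts" "length ts = d"
    by (cases T) auto
  then have "d_catalan d (ts ! c')" "valid_addr (ts ! c') cs"
    using Cons.prems by auto
  then show ?case
    using Cons.IH Cons.prems(3) T by auto
qed simp

lemma n_type_path_sibs:
  "valid_addr T cs \<Longrightarrow> n_type n T \<Longrightarrow> t \<in> set (path_sibs T cs) \<Longrightarrow> n_type n t"
proof (induction cs arbitrary: T)
  case (Cons c cs)
  then obtain i ts where "T = Nd i ts" "c < length ts" "\<forall>t\<in>set ts. n_type n t"
    by (cases T) auto
  then show ?case
    using Cons by (auto dest: in_set_takeD in_set_dropD)
qed simp

lemma root_type_rebuild:
  "length tys = length cs \<Longrightarrow> root_type (rebuild d tys cs ss b) = (tys @ [root_type b]) ! 0"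
  by (cases tys; cases cs) auto

lemma path_weight_Suc:
  "path_weight Hc d (v # vs) A (Suc p) =
     (if Suc (length (A 0)) = d then Hc v (occurrences (vs ! 0 # A 0)) else 0)
     * path_weight Hc d vs (\<lambda>m. A (Suc m)) p"
  by (simp only: path_weight_def prod.lessThan_Suc_shift nth_Cons_Suc nth_Cons_0)

lemma prod_list_map_mset_cong:
  "mset xs = mset ys \<Longrightarrow> prod_list (map f xs) = prod_list (map (f :: _ \<Rightarrow> 'b::comm_monoid_mult) ys)"
  by (metis mset_map prod_mset_prod_list)

lemma EH_rebuild:
  assumes "length tys = length cs" "length ss = (d - 1) * length cs" "\<forall>c\<in>set cs. c < d"
  shows "EH Hc (rebuild d tys cs ss b) =
    path_weight Hc d (tys @ [root_type b]) (\<lambda>m. map root_type (take (d - 1) (drop ((d - 1) * m) ss)))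
      (length cs) * prod_list (map (EH Hc) ss) * EH Hc b"
  using assms
proof (induction cs arbitrary: tys ss)
  case Nil
  then show ?case by (simp add: path_weight_def)
next
  case (Cons c cs)
  let ?e = "d - 1"
  let ?A = "\<lambda>ss m. map root_type (take ?e (drop (?e * m) ss))"
  obtain t tys' where tys: "tys = t # tys'" "length tys' = length cs"
    using Cons.prems(1) by (cases tys) auto
  have c: "c \<le> ?e" "Suc ?e = d" "?e \<le> length ss"
    using Cons.prems(2,3) by auto
  define R where "R = rebuild d tys' cs (drop ?e ss) b"
  define children where "children = take c ss @ [R] @ take (?e - c) (drop c ss)"
  have "take c ss @ take (?e - c) (drop c ss) = take ?e ss"
    using c by (metis take_add le_add_diff_inverse)
  then have M: "mset children = mset (R # take ?e ss)"
    unfolding children_def by (metis mset.simps(2) mset_append union_mset_add_mset_right append_Cons append_Nil)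
  let ?v = "(tys' @ [root_type b]) ! 0"
  let ?PW = "path_weight Hc d (tys' @ [root_type b]) (\<lambda>m. ?A ss (Suc m)) (length cs)"
  have "EH Hc (rebuild d tys (c # cs) ss b) = Hc t (mu children) * prod_list (map (EH Hc) children)"
    by (simp add: tys R_def children_def)
  moreover have "mu children = occurrences (?v # ?A ss 0)"
    using occurrences_mset_cong[of "map root_type children" "root_type R # ?A ss 0"] M
      root_type_rebuild[OF tys(2)] by (simp add: mu_eq_occurrences R_def)
  moreover have "prod_list (map (EH Hc) children) = EH Hc R * prod_list (map (EH Hc) (take ?e ss))"
    using prod_list_map_mset_cong[OF M] by simp
  moreover have "EH Hc R = ?PW * prod_list (map (EH Hc) (drop ?e ss)) * EH Hc b"
    unfolding R_def using Cons.IH[OF tys(2)] Cons.prems(2,3) by (simp add: add.commute)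
  ultimately have "EH Hc (rebuild d tys (c # cs) ss b) = Hc t (occurrences (?v # ?A ss 0))
      * ?PW * (prod_list (map (EH Hc) (take ?e ss)) * prod_list (map (EH Hc) (drop ?e ss))) * EH Hc b"
    by (simp only:) (simp add: mult_ac)
  also have "\<dots> = path_weight Hc d (tys @ [root_type b]) (?A ss) (length (c # cs)) * prod_list (map (EH Hc) ss) * EH Hc b"
    using c by (simp add: tys path_weight_Suc flip: prod_list.append map_append)
  finally show ?case .
qed

lemma path_types_sibs_rebuild:
  assumes "length tys = length cs" "length ss = (d - 1) * length cs" "\<forall>c\<in>set cs. c < d"
  shows "path_types (rebuild d tys cs ss b) cs = tys \<and> path_sibs (rebuild d tys cs ss b) cs = ss"
  using assms
proof (induction cs arbitrary: tys ss)
  case (Cons c cs)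
  let ?e = "d - 1"
  obtain t tys' where tys: "tys = t # tys'" "length tys' = length cs"
    using Cons.prems(1) by (cases tys) auto
  have c: "c \<le> ?e" "c \<le> length ss"
    using Cons.prems(2,3) by auto
  define R where "R = rebuild d tys' cs (drop ?e ss) b"
  define children where "children = take c ss @ [R] @ take (?e - c) (drop c ss)"
  have "children ! c = R" "take c children = take c ss" "drop (Suc c) children = take (?e - c) (drop c ss)"
    using c by (simp_all add: children_def nth_append)
  moreover have "take c ss @ take (?e - c) (drop c ss) @ drop ?e ss = ss"
    using c by (metis append.assoc append_take_drop_id le_add_diff_inverse take_add)
  moreover have "path_types R cs = tys'" "path_sibs R cs = drop ?e ss"
    unfolding R_def using Cons.IH[OF tys(2)] Cons.prems(2,3) by simp_all
  moreover have "rebuild d tys (c # cs) ss b = Nd t children"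
    by (simp add: tys R_def children_def)
  ultimately show ?case
    using tys(1) by simp
qed simp

lemma sum_rebuild_eq_0:
  assumes nil: "jac_nilpotent_pow n (Suc e) Hc (Suc q)" and i: "i < n" and b: "root_type b < n"
    and cs: "length cs = Suc q" "\<forall>c\<in>set cs. c < Suc e"
    and L\<^sub>0: "length L\<^sub>0 = e * Suc q" "\<forall>t\<in>set L\<^sub>0. root_type t < n"
  shows "(\<Sum>tys\<in>words q n. \<Sum>ss | mset ss = mset L\<^sub>0. EH Hc (rebuild (Suc e) (i # tys) cs ss b)) = 0"
proof -
  define \<Psi> where "\<Psi> rs = (\<Sum>tys\<in>words q n.
      path_weight Hc (Suc e) (i # tys @ [root_type b]) (\<lambda>m. take e (drop (e * m) rs)) (Suc q))" for rs
  define K where "K = card {\<sigma>. \<sigma> permutes {..<length L\<^sub>0} \<and> permute_list \<sigma> L\<^sub>0 = L\<^sub>0}"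
  have "EH Hc (rebuild (Suc e) (i # tys) cs ss b)
      = path_weight Hc (Suc e) (i # tys @ [root_type b]) (\<lambda>m. take e (drop (e * m) (map root_type ss))) (Suc q)
        * prod_list (map (EH Hc) L\<^sub>0) * EH Hc b"
    if "tys \<in> words q n" "mset ss = mset L\<^sub>0" for tys ss
    using EH_rebuild[of "i # tys" cs ss "Suc e" Hc b] that cs L\<^sub>0(1) mset_eq_length[OF that(2)]
      prod_list_map_mset_cong[OF that(2), of "EH Hc"]
    by (simp add: words_def take_map drop_map)
  then have "(\<Sum>tys\<in>words q n. \<Sum>ss | mset ss = mset L\<^sub>0. EH Hc (rebuild (Suc e) (i # tys) cs ss b))
      = (\<Sum>ss | mset ss = mset L\<^sub>0. \<Psi> (map root_type ss)) * prod_list (map (EH Hc) L\<^sub>0) * EH Hc b"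
    unfolding \<Psi>_def by (simp add: sum.swap[of _ "words q n"] sum_distrib_right)
  moreover have "of_nat K * (\<Sum>ss | mset ss = mset L\<^sub>0. \<Psi> (map root_type ss)) = 0"
  proof -
    have "of_nat K * (\<Sum>ss | mset ss = mset L\<^sub>0. \<Psi> (map root_type ss))
        = (\<Sum>\<pi> | \<pi> permutes {..<length L\<^sub>0}. \<Psi> (map root_type (permute_list \<pi> L\<^sub>0)))"
      unfolding K_def by (rule sum_permutations_permute_list[symmetric])
    also have "\<dots> = (\<Sum>\<pi> | \<pi> permutes {..<length (map root_type L\<^sub>0)}. \<Psi> (permute_list \<pi> (map root_type L\<^sub>0)))"
      by (rule sum.cong) (simp_all add: permute_list_map)
    also have "\<dots> = 0"
      unfolding \<Psi>_def using L\<^sub>0 by (intro symmetrised_path_weight_eq_0[OF nil i b]) auto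
    finally show ?thesis .
  qed
  moreover have "K \<noteq> 0"
  proof -
    have "finite {\<sigma>. \<sigma> permutes {..<length L\<^sub>0} \<and> permute_list \<sigma> L\<^sub>0 = L\<^sub>0}"
      using finite_permutations[of "{..<length L\<^sub>0}"] by (simp add: Collect_conj_eq)
    moreover have "id \<in> {\<sigma>. \<sigma> permutes {..<length L\<^sub>0} \<and> permute_list \<sigma> L\<^sub>0 = L\<^sub>0}"
      by (simp add: permutes_id)
    ultimately show ?thesis
      unfolding K_def by (metis card_0_eq empty_iff)
  qed
  ultimately show ?thesis
    by simp
qed

lemma sum_shuffle_class:
  assumes "valid_addr T (a @ cs)" "d_catalan d T" "cs \<noteq> []"
  shows "(\<Sum>T'\<in>shuffle_class n d T a cs. g T') =
    (\<Sum>tys\<in>words (length cs - 1) n. \<Sum>ss | mset ss = mset (path_sibs (subtree_at T a) cs).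
       g (replace_at T a (rebuild d (root_type (subtree_at T a) # tys) cs ss (subtree_at T (a @ cs)))))"
proof -
  define T\<^sub>0 where "T\<^sub>0 = subtree_at T a"
  define f where "f = (\<lambda>(tys, ss). replace_at T a (rebuild d (root_type T\<^sub>0 # tys) cs ss (subtree_at T (a @ cs))))"
  define D where "D = words (length cs - 1) n \<times> {ss. mset ss = mset (path_sibs T\<^sub>0 cs)}"
  have a: "valid_addr T a" and T\<^sub>0: "valid_addr T\<^sub>0 cs" "d_catalan d T\<^sub>0"
    using assms(1,2) by (simp_all add: valid_addr_append T\<^sub>0_def d_catalan_subtree_at)
  have "hd (path_types T\<^sub>0 cs) = root_type T\<^sub>0"
    using assms(3) by (cases T\<^sub>0; cases cs) auto
  then have "shuffle_class n d T a cs = f ` D"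
    unfolding shuffle_class_def f_def D_def T\<^sub>0_def[symmetric] by (force simp: words_def)
  moreover have "inj_on f D"
  proof (rule inj_onI, clarify)
    fix tys ss tys' ss' assume in_D: "(tys, ss) \<in> D" "(tys', ss') \<in> D" and "f (tys, ss) = f (tys', ss')"
    then have "rebuild d (root_type T\<^sub>0 # tys) cs ss (subtree_at T (a @ cs))
        = rebuild d (root_type T\<^sub>0 # tys') cs ss' (subtree_at T (a @ cs))"
      using subtree_at_replace_at[OF a] unfolding f_def by (metis case_prod_conv)
    moreover have "length ss = (d - 1) * length cs" "length ss' = (d - 1) * length cs"
      using in_D length_path_sibs[OF T\<^sub>0(2,1)] by (auto simp: D_def dest: mset_eq_length)
    moreover have "length (root_type T\<^sub>0 # tys) = length cs" "length (root_type T\<^sub>0 # tys') = length cs"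
      using in_D assms(3) by (auto simp: D_def words_def)
    ultimately show "tys = tys' \<and> ss = ss'"
      using path_types_sibs_rebuild path_positions_less_arity[OF T\<^sub>0(2,1)] by (metis list.inject)
  qed
  ultimately show ?thesis
    by (simp add: sum.reindex D_def f_def sum.cartesian_product T\<^sub>0_def prod.case_distrib)
qed

theorem lemma3p6:
  fixes d n p k :: nat
    and Hc :: "nat \<Rightarrow> (nat \<Rightarrow>\<^sub>0 nat) \<Rightarrow> complex"
    and T :: ttree and a cs :: "nat list"
  assumes "d \<ge> 2" and "n \<ge> 1"
    and "1 \<le> p" and "p \<le> n"
    and "jac_nilpotent_pow n d Hc p"
    and "d_catalan d T" and "n_type n T" and "internal_count T = k"
    and "length cs = p" and "valid_addr T (a @ cs)"
  shows "(\<Sum>T'\<in>shuffle_class n d T a cs. EH Hc T') = 0"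
proof -
  obtain q where p: "p = Suc q"
    using assms(3) by (cases p) auto
  obtain e where d: "d = Suc e"
    using assms(1) by (cases d) auto
  define T\<^sub>0 where "T\<^sub>0 = subtree_at T a"
  have a: "valid_addr T a" and T\<^sub>0: "valid_addr T\<^sub>0 cs" "d_catalan d T\<^sub>0" "n_type n T\<^sub>0"
    using assms(6,7,10) by (simp_all add: valid_addr_append T\<^sub>0_def d_catalan_subtree_at n_type_subtree_at)
  obtain C where C: "\<And>s. root_type s = root_type T\<^sub>0 \<Longrightarrow> EH Hc (replace_at T a s) = C * EH Hc s"
    using EH_replace_at[OF a] unfolding T\<^sub>0_def by blast
  let ?b = "subtree_at T\<^sub>0 cs"
  have "cs \<noteq> []"
    using assms(9) p by auto
  have "(\<Sum>T'\<in>shuffle_class n d T a cs. EH Hc T') = (\<Sum>tys\<in>words q n.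
      \<Sum>ss | mset ss = mset (path_sibs T\<^sub>0 cs). EH Hc (replace_at T a (rebuild d (root_type T\<^sub>0 # tys) cs ss ?b)))"
    using sum_shuffle_class[OF assms(10,6) \<open>cs \<noteq> []\<close>, where n = n and g = "EH Hc"] assms(9) p
    by (simp add: T\<^sub>0_def subtree_at_append)
  also have "\<dots> = C * (\<Sum>tys\<in>words q n.
      \<Sum>ss | mset ss = mset (path_sibs T\<^sub>0 cs). EH Hc (rebuild d (root_type T\<^sub>0 # tys) cs ss ?b))"
    unfolding sum_distrib_left
  proof (rule sum.cong[OF refl], rule sum.cong[OF refl])
    fix tys ss assume "tys \<in> words q n"
    then have "length (root_type T\<^sub>0 # tys) = length cs"
      using assms(9) p by (simp add: words_def)
    then show "EH Hc (replace_at T a (rebuild d (root_type T\<^sub>0 # tys) cs ss ?b))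
        = C * EH Hc (rebuild d (root_type T\<^sub>0 # tys) cs ss ?b)"
      by (intro C) (simp add: root_type_rebuild)
  qed
  also have "\<dots> = 0"
    unfolding d
  proof (intro mult_eq_0_iff[THEN iffD2] disjI2 sum_rebuild_eq_0)
    show "jac_nilpotent_pow n (Suc e) Hc (Suc q)"
      using assms(5) p d by simp
    show "root_type T\<^sub>0 < n" "root_type (subtree_at T\<^sub>0 cs) < n"
      using T\<^sub>0 by (simp_all add: n_type_root_type n_type_subtree_at)
    show "length cs = Suc q" "\<forall>c\<in>set cs. c < Suc e"
      using assms(9) p path_positions_less_arity[OF T\<^sub>0(2,1)] d by auto
    show "length (path_sibs T\<^sub>0 cs) = e * Suc q" "\<forall>t\<in>set (path_sibs T\<^sub>0 cs). root_type t < n"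
      using length_path_sibs[OF T\<^sub>0(2,1)] assms(9) p d n_type_path_sibs[OF T\<^sub>0(1,3)] n_type_root_type
      by auto
  qed
  finally show ?thesis .
qed

end
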